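(* In the modified multi-phase process described in the context, every element $x\in S^+_{3/4}$ that is considered by the process passes the preliminary test and all the following $\eta$ tests with probability at most $2^{-n}$.
   Context: Let $n\ge2$ be an integer such that $m=n/\log_2 n$ is an integer, and let $S'$ be a set of $m$ distinct elements of a totally ordered set. For $\rho\in(0,1]$, $S^-_\rho$ denotes the set of the $\lceil \rho m\rceil$ smallest elements of $S'$ and $S^+_\rho=S'\setminus S^-_\rho$. There are two oracles $\mathcal{O}_1,\mathcal{O}_2$ which can be queried with an element $x\in S'$ and answer "relevant" or "not relevant" in constant time, all answers being mutually independent; for constants $p_1,p_2\in[0,\tfrac12)$: $\mathcal{O}_1$ reports $x$ relevant with probability at least $1-p_1$ if $x\in S^-_{1/6}$ and at most $p_1$ if $x\in S^+_{1/3}$; $\mathcal{O}_2$ reports $x$ relevant with probability at least $1-p_2$ if $x\in S^-_{1/3}$ and at most $p_2$ if $x\in S^+_{3/4}$. For $q\in[0,\tfrac12)$ let $c_q=\lceil 4(1-q)/(1-2q)^2\rceil$. Let $\eta = 1+\lceil \log_2 \frac{n}{\log_2 n}\rceil$. Modified multi-phase process: the elements of $S'$ are considered one at a time. For the current element $x$, a preliminary test is performed consisting of $8c_{p_1}\lceil \ln n\rceil+1$ queries to $\mathcal{O}_1$ on $x$; it is passed if the majority report $x$ relevant, otherwise $x$ is discarded and the next element is considered. Then, for $i=1,\dots,\eta$, the $i$-th test consists of $2\lceil 2^i\ln n\rceil c_{p_2}+1$ queries to $\mathcal{O}_2$ on $x$ and is passed if the majority report $x$ relevant; if $x$ fails a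 test it is discarded and the next element is considered. The process returns the first element that passes the $\eta$-th test. Here $\ln$ is the natural logarithm. *)

theory Defs
  imports "HOL-Probability.Probability"
begin

text \<open>The set of the ceil(rho * |S|) smallest elements of a finite set S.\<close>
definition S_minus :: "'a::linorder set \<Rightarrow> real \<Rightarrow> 'a set" where
  "S_minus S \<rho> = {x \<in> S. card {y \<in> S. y < x} < nat \<lceil>\<rho> * real (card S)\<rceil>}"

definition S_plus :: "'a::linorder set \<Rightarrow> real \<Rightarrow> 'a set" where
  "S_plus S \<rho> = S - S_minus S \<rho>"

definition c_const :: "real \<Rightarrow> nat" where
  "c_const q = nat \<lceil>4 * (1 - q) / (1 - 2 * q)^2\<rceil>"

definition eta :: "nat \<Rightarrow> nat" where
  "eta n = 1 + nat \<lceil>log 2 (real n / log 2 (real n))\<rceil>"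

text \<open>Number of queries in test t: t = 0 is the preliminary test (oracle O1),
  t = i \<ge> 1 is the i-th test (oracle O2).\<close>
definition test_size :: "real \<Rightarrow> real \<Rightarrow> nat \<Rightarrow> nat \<Rightarrow> nat" where
  "test_size p1 p2 n t =
     (if t = 0 then 8 * c_const p1 * nat \<lceil>ln (real n)\<rceil> + 1
      else 2 * nat \<lceil>2 ^ t * ln (real n)\<rceil> * c_const p2 + 1)"

definition query_idx :: "real \<Rightarrow> real \<Rightarrow> nat \<Rightarrow> (nat \<times> nat) set" where
  "query_idx p1 p2 n = {(t, j). t \<le> eta n \<and> j < test_size p1 p2 n t}"

text \<open>Joint distribution of all oracle answers on an element x, where O1 reports x
  relevant with probability r1 and O2 with probability r2, all answers independent.\<close>
definition answers :: "real \<Rightarrow> real \<Rightarrow> nat \<Rightarrow> real \<Rightarrow> real \<Rightarrow> (nat \<times> nat \<Rightarrow> bool) pmf" where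
  "answers p1 p2 n r1 r2 =
     Pi_pmf (query_idx p1 p2 n) False
       (\<lambda>(t, j). bernoulli_pmf (if t = 0 then r1 else r2))"

definition passes_all :: "real \<Rightarrow> real \<Rightarrow> nat \<Rightarrow> (nat \<times> nat \<Rightarrow> bool) set" where
  "passes_all p1 p2 n =
     {\<omega>. \<forall>t \<le> eta n. 2 * card {j. j < test_size p1 p2 n t \<and> \<omega> (t, j)} > test_size p1 p2 n t}"

end

theory Submission
  imports Defs
begin

text \<open>It suffices to look at the last test: an element of \<open>S\<^sup>+\<^sub>3\<^sub>/\<^sub>4\<close> is reported relevant
  by \<open>\<O>\<^sub>2\<close> with probability \<open>r \<le> p\<^sub>2 < 1/2\<close>, so the number of positive answers among the
  \<open>N\<close> queries of test \<open>\<eta>\<close> is binomial with parameters \<open>N, r\<close>, and by Hoeffding's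
  inequality a strict majority has probability at most \<open>exp (-2N(1/2 - r)\<^sup>2)\<close>.
  Since \<open>2\<^sup>\<eta> \<ge> 2n / log\<^sub>2 n\<close> and \<open>c\<^sub>p\<^sub>2 (1 - 2p\<^sub>2)\<^sup>2 \<ge> 2\<close>, the exponent is at least \<open>n ln 2\<close>.\<close>

lemma Pi_pmf_count_block_eq_binomial_pmf:
  fixes I :: "('a \<times> nat) set" and q :: "'a \<times> nat \<Rightarrow> bool pmf"
  assumes "finite I" and "{t} \<times> {..<N} \<subseteq> I"
    and "\<And>j. j < N \<Longrightarrow> q (t, j) = bernoulli_pmf r" and "0 \<le> r" "r \<le> 1"
  shows "map_pmf (\<lambda>\<omega>. card {j. j < N \<and> \<omega> (t, j)}) (Pi_pmf I False q) = binomial_pmf N r"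
proof -
  let ?A = "{t} \<times> {..<N}"
  have count_restrict: "card {z \<in> ?A. if z \<in> ?A then \<omega> z else False} = card {j. j < N \<and> \<omega> (t, j)}"
    for \<omega> :: "'a \<times> nat \<Rightarrow> bool"
  proof -
    have "{z \<in> ?A. if z \<in> ?A then \<omega> z else False} = Pair t ` {j. j < N \<and> \<omega> (t, j)}"
      by auto
    then show ?thesis
      by (simp add: card_image inj_on_def)
  qed
  have "binomial_pmf N r = map_pmf (\<lambda>f. card {z \<in> ?A. f z}) (Pi_pmf ?A False (\<lambda>_. bernoulli_pmf r))"
    by (rule binomial_pmf_altdef') (use assms(4,5) in \<open>auto simp: card_cartesian_product\<close>)
  also have "Pi_pmf ?A False (\<lambda>_. bernoulli_pmf r) = Pi_pmf ?A False q"
    by (intro Pi_pmf_cong) (auto simp: assms(3))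
  also have "\<dots> = map_pmf (\<lambda>f z. if z \<in> ?A then f z else False) (Pi_pmf I False q)"
    by (rule Pi_pmf_subset[OF assms(1,2)])
  finally show ?thesis
    by (simp add: map_pmf_comp count_restrict)
qed

lemma binomial_pmf_majority_le:
  assumes "N > 0" and "0 \<le> r" "r \<le> 1/2"
  shows "measure_pmf.prob (binomial_pmf N r) {k. 2 * k > N} \<le> exp (-2 * real N * (1/2 - r)\<^sup>2)"
proof -
  interpret binomial_distribution N r
    by unfold_locales (use assms in auto)
  have "measure_pmf.prob (binomial_pmf N r) {k. 2 * k > N}
          \<le> measure_pmf.prob (binomial_pmf N r) {k. real k / real N \<ge> r + (1/2 - r)}"
    using assms(1) by (intro measure_pmf.finite_measure_mono) (auto simp: field_simps)
  also have "\<dots> \<le> exp (-2 * real N * (1/2 - r)\<^sup>2)"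
    using prob_ge'[of "1/2 - r"] assms by simp
  finally show ?thesis .
qed

lemma finite_query_idx: "finite (query_idx p1 p2 n)"
proof (rule finite_subset)
  let ?M = "Max (test_size p1 p2 n ` {..eta n})"
  show "query_idx p1 p2 n \<subseteq> {..eta n} \<times> {..<?M}"
    by (auto simp: query_idx_def intro: less_le_trans[OF _ Max_ge])
qed simp

lemma two_pow_eta_mult_ln_ge:
  fixes n :: nat
  assumes "n \<ge> 2"
  shows "2 ^ eta n * ln (real n) \<ge> 2 * real n * ln 2"
proof -
  define z where "z = real n / log 2 (real n)"
  have "log 2 (real n) \<ge> 1" "ln (real n) > 0"
    using assms by simp_all
  then have "z > 0" and z_ln: "z * ln (real n) = real n * ln 2"
    using assms by (simp_all add: z_def log_def)
  have "z = 2 powr (log 2 z)"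
    using \<open>z > 0\<close> by simp
  also have "\<dots> \<le> 2 powr real (nat \<lceil>log 2 z\<rceil>)"
    by (intro powr_mono) linarith+
  finally have "2 * z \<le> 2 ^ eta n"
    by (simp add: eta_def z_def powr_realpow)
  then have "2 * z * ln (real n) \<le> 2 ^ eta n * ln (real n)"
    using \<open>ln (real n) > 0\<close> by (intro mult_right_mono) auto
  then show ?thesis
    by (simp add: z_ln mult.assoc)
qed

lemma c_const_mult_ge:
  assumes "q < 1/2"
  shows "real (c_const q) * (1 - 2 * q)\<^sup>2 \<ge> 2"
proof -
  have "(1 - 2 * q)\<^sup>2 > 0"
    using assms by simp
  moreover have "real (c_const q) \<ge> 4 * (1 - q) / (1 - 2 * q)\<^sup>2"
    unfolding c_const_def by linarith
  ultimately have "real (c_const q) * (1 - 2 * q)\<^sup>2 \<ge> 4 * (1 - q)"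
    by (simp add: divide_le_eq)
  moreover have "4 * (1 - q) \<ge> 2"
    using assms by simp
  ultimately show ?thesis
    by linarith
qed

lemma test_size_ge:
  fixes p1 p2 :: real and n t :: nat
  assumes "t \<ge> 1"
  shows "real (test_size p1 p2 n t) \<ge> 2 * (2 ^ t * ln (real n)) * real (c_const p2)"
proof -
  have "real (nat \<lceil>2 ^ t * ln (real n)\<rceil>) \<ge> 2 ^ t * ln (real n)"
    by linarith
  then have "2 * (2 ^ t * ln (real n)) * real (c_const p2)
               \<le> 2 * real (nat \<lceil>2 ^ t * ln (real n)\<rceil>) * real (c_const p2)"
    by (intro mult_right_mono) auto
  then show ?thesis
    using assms by (simp add: test_size_def)
qed

lemma last_test_exponent_ge:
  fixes p1 p2 r :: real and n :: nat
  assumes "n \<ge> 2" and "r \<le> p2" and "p2 < 1/2"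
  shows "2 * real (test_size p1 p2 n (eta n)) * (1/2 - r)\<^sup>2 \<ge> real n * ln 2"
proof -
  define L where "L = 2 ^ eta n * ln (real n)"
  have "L \<ge> 2 * real n * ln 2"
    unfolding L_def by (rule two_pow_eta_mult_ln_ge[OF assms(1)])
  moreover have "real n * ln 2 \<ge> 0"
    by simp
  ultimately have "L \<ge> 0"
    by linarith
  have "(1/2 - r)\<^sup>2 \<ge> (1/2 - p2)\<^sup>2"
    using assms(2,3) by (intro power_mono) auto
  then have gap: "(1/2 - r)\<^sup>2 \<ge> (1 - 2 * p2)\<^sup>2 / 4"
    by (simp add: power2_eq_square field_simps)
  have "L * 2 \<le> L * (real (c_const p2) * (1 - 2 * p2)\<^sup>2)"
    using c_const_mult_ge[OF assms(3)] \<open>L \<ge> 0\<close> by (intro mult_left_mono) auto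
  also have "\<dots> = 2 * (2 * L * real (c_const p2)) * ((1 - 2 * p2)\<^sup>2 / 4)"
    by simp
  also have "\<dots> \<le> 2 * real (test_size p1 p2 n (eta n)) * (1/2 - r)\<^sup>2"
    using test_size_ge[where t = "eta n"] gap \<open>L \<ge> 0\<close>
    by (intro mult_mono mult_left_mono) (auto simp: L_def eta_def)
  finally show ?thesis
    using \<open>L \<ge> 2 * real n * ln 2\<close> \<open>real n * ln 2 \<ge> 0\<close> by linarith
qed

theorem lemma15:
  fixes S' :: "'a::linorder set" and n m :: nat and p1 p2 :: real
    and rel1 rel2 :: "'a \<Rightarrow> real" and x :: 'a
  assumes "n \<ge> 2"
    and "real n / log 2 (real n) = real m"
    and "finite S'" and "card S' = m"
    and "0 \<le> p1" "p1 < 1/2" "0 \<le> p2" "p2 < 1/2"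
    and "\<And>y. y \<in> S' \<Longrightarrow> 0 \<le> rel1 y \<and> rel1 y \<le> 1"
    and "\<And>y. y \<in> S' \<Longrightarrow> 0 \<le> rel2 y \<and> rel2 y \<le> 1"
    and "\<And>y. y \<in> S_minus S' (1/6) \<Longrightarrow> rel1 y \<ge> 1 - p1"
    and "\<And>y. y \<in> S_plus S' (1/3) \<Longrightarrow> rel1 y \<le> p1"
    and "\<And>y. y \<in> S_minus S' (1/3) \<Longrightarrow> rel2 y \<ge> 1 - p2"
    and "\<And>y. y \<in> S_plus S' (3/4) \<Longrightarrow> rel2 y \<le> p2"
    and "x \<in> S_plus S' (3/4)"
  shows "measure_pmf.prob (answers p1 p2 n (rel1 x) (rel2 x)) (passes_all p1 p2 n)
           \<le> 2 powr (- real n)"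
proof -
  define N where "N = test_size p1 p2 n (eta n)"
  define count_last where "count_last \<omega> = card {j. j < N \<and> \<omega> (eta n, j)}" for \<omega>
  have "x \<in> S'"
    using assms(15) by (simp add: S_plus_def)
  then have r: "0 \<le> rel2 x" "rel2 x \<le> p2"
    using assms(10,14,15) by auto
  have "N > 0" "eta n \<noteq> 0"
    by (simp_all add: N_def test_size_def eta_def)
  have count_last_distr: "binomial_pmf N (rel2 x) = map_pmf count_last (answers p1 p2 n (rel1 x) (rel2 x))"
    unfolding answers_def count_last_def
    by (rule Pi_pmf_count_block_eq_binomial_pmf[OF finite_query_idx, symmetric])
       (use \<open>eta n \<noteq> 0\<close> r assms(8) in \<open>auto simp: query_idx_def N_def\<close>)
  have "measure_pmf.prob (answers p1 p2 n (rel1 x) (rel2 x)) (passes_all p1 p2 n)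
          \<le> measure_pmf.prob (answers p1 p2 n (rel1 x) (rel2 x)) {\<omega>. 2 * count_last \<omega> > N}"
    by (intro measure_pmf.finite_measure_mono) (auto simp: passes_all_def N_def count_last_def)
  also have "\<dots> = measure_pmf.prob (binomial_pmf N (rel2 x)) {k. 2 * k > N}"
    by (simp add: count_last_distr)
  also have "\<dots> \<le> exp (-2 * real N * (1/2 - rel2 x)\<^sup>2)"
    by (rule binomial_pmf_majority_le) (use \<open>N > 0\<close> r assms(8) in auto)
  also have "\<dots> \<le> exp (- (real n * ln 2))"
    using last_test_exponent_ge[OF assms(1) r(2) assms(8)] by (simp add: N_def)
  also have "\<dots> = 2 powr (- real n)"
    by (simp add: powr_def)
  finally show ?thesis .
qed

end
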